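(* Let $F$ be a nontrivial finite group, $\tfrac12<p<1$, $\lambda=\frac{p}{1-p}$, and $\alpha=\frac{\log|F|}{\log\lambda}$. Then there exist constants $m_0$ and $0<c\le C$ depending only on $p$ and $|F|$ such that for every integer $m\ge m_0$, \[\frac{c}{m^{\alpha}}\le\sum_{a=1}^{\infty}|F|^{-a}\Big(1-\frac{\lambda-1}{\lambda^a-1}\Big)^m\le\frac{C}{m^{\alpha}}.\] *)

theory Defs
  imports Complex_Main "HOL-Algebra.Group"
begin

end

theory Submission
  imports Defs
begin

(* Write n = |F| and l = \<lambda>, so that n = l powr \<alpha>, and x_a = (l - 1) / (l^a - 1),
   which lies between (l - 1) / l^a and 1 / l^(a-1). Choose B with l^B of order m.
   Lower bound: for the single index a = B + 2 with l^B <= 2m we have m x_a <= 1/2, so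
   (1 - x_a)^m >= 1/2 by Bernoulli, while n^-a = (l^a) powr -\<alpha> is of order m powr -\<alpha>.
   Upper bound: with l^B <= m the tail a > B is a geometric series of size O(n^-B).
   For the head a <= B use (1 - x)^m <= exp (-m x) <= (k / (m x))^k with k fixed such that
   l^k > n: the head is then dominated by a geometric series of ratio l^k / n > 1, hence by
   its last term, which is again O(n^-B). Finally n^-B = O(m powr -\<alpha>) as m < l^(B+1). *)

definition summand :: "real \<Rightarrow> real \<Rightarrow> nat \<Rightarrow> nat \<Rightarrow> real" where
  "summand n l m a = (1 / n ^ Suc a) * (1 - (l - 1) / (l ^ Suc a - 1)) ^ m"

lemma exists_power_bracket:
  fixes l y :: real
  assumes "1 < l" "1 \<le> y"
  shows "\<exists>B. l ^ B \<le> y \<and> y < l ^ Suc B"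
proof -
  have ex: "\<exists>N. y < l ^ N" using real_arch_pow[OF assms(1)] by blast
  define N where "N = (LEAST N. y < l ^ N)"
  have N: "y < l ^ N" unfolding N_def using LeastI_ex[OF ex] .
  then obtain B where B: "N = Suc B" using assms(2) by (cases N) auto
  have "\<not> y < l ^ B" using not_less_Least[of B "\<lambda>N. y < l ^ N"] B N_def by auto
  then show ?thesis using N B by (auto simp: not_less)
qed

lemma power_powr_log:
  fixes l n :: real
  assumes "1 < l" "0 < n"
  shows "(l ^ b) powr log l n = n ^ b"
proof -
  have "(l ^ b) powr log l n = (l powr log l n) powr real b"
    using assms(1) by (simp add: powr_realpow[symmetric] powr_powr_swap)
  also have "\<dots> = n ^ b" using assms by (simp add: powr_realpow)
  finally show ?thesis .
qed

lemma power_ratio_bounds: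
  fixes l :: real
  assumes "1 < l"
  shows "0 < (l - 1) / (l ^ Suc b - 1)" "(l - 1) / (l ^ Suc b - 1) \<le> 1"
    "(l - 1) / l ^ Suc b \<le> (l - 1) / (l ^ Suc b - 1)" "(l - 1) / (l ^ Suc b - 1) \<le> 1 / l ^ b"
proof -
  have "1 \<le> l ^ b" using assms by simp
  then have lb: "l \<le> l ^ Suc b" using assms by simp
  then have pos: "0 < l ^ Suc b - 1" using assms by linarith
  show "0 < (l - 1) / (l ^ Suc b - 1)" using pos assms by simp
  show "(l - 1) / (l ^ Suc b - 1) \<le> 1" using pos lb by simp
  show "(l - 1) / l ^ Suc b \<le> (l - 1) / (l ^ Suc b - 1)"
    using pos assms by (intro divide_left_mono) auto
  have "(l - 1) * l ^ b \<le> l ^ Suc b - 1" using \<open>1 \<le> l ^ b\<close> by (simp add: algebra_simps)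
  then show "(l - 1) / (l ^ Suc b - 1) \<le> 1 / l ^ b" using pos \<open>1 \<le> l ^ b\<close>
    by (simp add: divide_simps)
qed

lemma one_minus_power_le_exp:
  fixes x :: real
  assumes "x \<le> 1"
  shows "(1 - x) ^ m \<le> exp (- (real m * x))"
proof (cases "m = 0")
  case False
  then show ?thesis
    using exp_ge_one_minus_x_over_n_power_n[of "real m * x" m] assms by simp
qed simp

lemma exp_neg_le_inverse_power:
  fixes y :: real
  assumes "0 < y"
  shows "exp (- y) \<le> (real k / y) ^ k"
proof (cases "k = 0")
  case False
  define t where "t = y / real k"
  have t: "0 < t" using assms False by (simp add: t_def)
  have "t \<le> exp t" using exp_ge_add_one_self[of t] by linarith
  then have "t ^ k \<le> exp t ^ k" using t by (intro power_mono) auto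
  also have "exp t ^ k = exp y"
    using False by (simp add: t_def exp_of_nat_mult[symmetric])
  finally have "1 / exp y \<le> 1 / t ^ k" using t by (intro divide_left_mono) auto
  then show ?thesis by (simp add: exp_minus inverse_eq_divide t_def power_divide)
qed (use assms in simp)

lemma summand_nonneg: "0 < n \<Longrightarrow> 1 < l \<Longrightarrow> 0 \<le> summand n l m a"
  using power_ratio_bounds(2)[of l a] by (simp add: summand_def)

lemma summand_le_geometric:
  assumes "0 < n" "1 < l"
  shows "summand n l m a \<le> (1 / n) ^ Suc a"
proof -
  have "(1 - (l - 1) / (l ^ Suc a - 1)) ^ m \<le> 1"
    using power_ratio_bounds(1,2)[OF assms(2), of a] by (intro power_le_one) auto
  then show ?thesis
    using assms(1) by (simp add: summand_def power_one_over divide_right_mono)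
qed

lemma summable_summand:
  assumes "1 < n" "1 < l"
  shows "summable (summand n l m)"
  by (rule summable_comparison_test[where g = "\<lambda>a. (1 / n) ^ Suc a"])
    (use assms summand_nonneg summand_le_geometric in auto)

lemma suminf_summand_lower_bound:
  fixes n l :: real and m :: nat
  assumes "1 < n" "1 < l" "1 \<le> m"
  shows "1 / (2 * (2 * l\<^sup>2 * real m) powr log l n) \<le> suminf (summand n l m)"
proof -
  obtain B where B: "l ^ B \<le> 2 * real m" "2 * real m < l ^ Suc B"
    using exists_power_bracket[OF assms(2), of "2 * real m"] assms(3) by auto
  define x where "x = (l - 1) / (l ^ Suc (Suc B) - 1)"
  have "x \<le> 1 / l ^ Suc B" unfolding x_def by (rule power_ratio_bounds(4)[OF assms(2)])
  also have "\<dots> < 1 / (2 * real m)" using B(2) assms(3) by (intro divide_strict_left_mono) auto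
  finally have "real m * x \<le> 1 / 2" using assms(3) by (simp add: field_simps)
  then have "1 / 2 \<le> 1 + real m * (- x)" by simp
  also have "\<dots> \<le> (1 + (- x)) ^ m"
  proof (rule Bernoulli_inequality)
    show "- 1 \<le> - x"
      unfolding x_def using power_ratio_bounds(2)[OF assms(2), of "Suc B"] by linarith
  qed
  finally have half: "1 / 2 \<le> (1 - x) ^ m" by simp
  have "n ^ Suc (Suc B) = (l ^ Suc (Suc B)) powr log l n"
    by (rule power_powr_log[OF assms(2), symmetric]) (use assms(1) in simp)
  also have "\<dots> \<le> (2 * l\<^sup>2 * real m) powr log l n"
  proof (rule powr_mono2)
    show "0 \<le> log l n" using assms by simp
    have "l ^ Suc (Suc B) = l\<^sup>2 * l ^ B" by (simp add: power2_eq_square)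
    also have "\<dots> \<le> l\<^sup>2 * (2 * real m)" using B(1) by (intro mult_left_mono) auto
    finally show "l ^ Suc (Suc B) \<le> 2 * l\<^sup>2 * real m" by simp
  qed (use assms(2) in simp)
  finally have weight: "n ^ Suc (Suc B) \<le> (2 * l\<^sup>2 * real m) powr log l n" .
  have "1 / (2 * (2 * l\<^sup>2 * real m) powr log l n) = (1 / 2) / (2 * l\<^sup>2 * real m) powr log l n"
    by simp
  also have "\<dots> \<le> (1 - x) ^ m / n ^ Suc (Suc B)"
    using half weight assms(1) by (intro frac_le) auto
  also have "\<dots> = summand n l m (Suc B)" by (simp add: summand_def x_def)
  also have "\<dots> \<le> suminf (summand n l m)"
    using sum_le_suminf[OF summable_summand[OF assms(1,2)], of "{Suc B}"]
      summand_nonneg[of n l] assms by auto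
  finally show ?thesis .
qed

lemma summand_le_ratio_power:
  assumes "0 < n" "1 < l" "0 < m"
  shows "summand n l m a \<le> (l ^ k / n) ^ Suc a * (real k / (real m * (l - 1))) ^ k"
proof -
  define x where "x = (l - 1) / (l ^ Suc a - 1)"
  have "(1 - x) ^ m \<le> exp (- (real m * x))"
    using power_ratio_bounds(2)[OF assms(2)] by (intro one_minus_power_le_exp) (simp add: x_def)
  also have "\<dots> \<le> exp (- (real m * ((l - 1) / l ^ Suc a)))"
  proof -
    have "real m * ((l - 1) / l ^ Suc a) \<le> real m * x"
      unfolding x_def by (intro mult_left_mono power_ratio_bounds(3)[OF assms(2)]) simp
    then show ?thesis by simp
  qed
  also have "\<dots> \<le> (real k / (real m * ((l - 1) / l ^ Suc a))) ^ k"
    using assms by (intro exp_neg_le_inverse_power) simp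
  also have "\<dots> = (l ^ k) ^ Suc a * (real k / (real m * (l - 1))) ^ k"
    by (simp add: power_divide power_mult_distrib power_mult[symmetric] mult.commute)
  finally have "(1 - x) ^ m \<le> (l ^ k) ^ Suc a * (real k / (real m * (l - 1))) ^ k" .
  then have "summand n l m a \<le> 1 / n ^ Suc a * ((l ^ k) ^ Suc a * (real k / (real m * (l - 1))) ^ k)"
    unfolding summand_def x_def[symmetric] using assms(1) by (intro mult_left_mono) auto
  then show ?thesis by (simp add: power_divide)
qed

lemma sum_power_Suc_le:
  fixes r :: real
  assumes "1 < r"
  shows "(\<Sum>a<B. r ^ Suc a) \<le> r / (r - 1) * r ^ B"
proof -
  have "(\<Sum>a<B. r ^ Suc a) = r * ((r ^ B - 1) / (r - 1))"
    using assms by (simp add: sum_distrib_left[symmetric] sum_gp_strict divide_simps)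
      (simp add: algebra_simps)
  also have "\<dots> \<le> r * (r ^ B / (r - 1))"
    using assms by (intro mult_left_mono divide_right_mono) auto
  finally show ?thesis by simp
qed

lemma sum_summand_head_le:
  fixes n l :: real and m k B :: nat
  assumes "0 < n" "1 < l" "n < l ^ k" "l ^ B \<le> real m"
  defines "r \<equiv> l ^ k / n"
  shows "(\<Sum>a<B. summand n l m a) \<le> (real k / (l - 1)) ^ k * (r / (r - 1)) * (1 / n) ^ B"
proof -
  have r: "1 < r" using assms(1,3) by (simp add: r_def)
  have "0 < real m" using assms(4) one_le_power[of l B] assms(2) by linarith
  define D where "D = (real k / (real m * (l - 1))) ^ k"
  have D: "0 \<le> D" using assms(2) by (simp add: D_def)
  have "D * r ^ B = (real k / (l - 1)) ^ k * (l ^ B / real m) ^ k * (1 / n) ^ B"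
    by (simp add: D_def r_def power_divide power_mult_distrib power_mult[symmetric] mult.commute)
  also have "\<dots> \<le> (real k / (l - 1)) ^ k * 1 * (1 / n) ^ B"
    using assms(1,2,4) \<open>0 < real m\<close>
    by (intro mult_left_mono mult_right_mono power_le_one) auto
  finally have last_term: "D * r ^ B \<le> (real k / (l - 1)) ^ k * (1 / n) ^ B" by simp
  have "(\<Sum>a<B. summand n l m a) \<le> (\<Sum>a<B. D * r ^ Suc a)"
    using summand_le_ratio_power[OF assms(1,2)] \<open>0 < real m\<close>
    by (intro sum_mono) (simp add: D_def r_def mult.commute)
  also have "\<dots> \<le> D * (r / (r - 1) * r ^ B)"
    unfolding sum_distrib_left[symmetric] using sum_power_Suc_le[OF r] D by (rule mult_left_mono)
  also have "\<dots> = r / (r - 1) * (D * r ^ B)" by simp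
  also have "\<dots> \<le> r / (r - 1) * ((real k / (l - 1)) ^ k * (1 / n) ^ B)"
    using last_term r by (intro mult_left_mono) auto
  finally show ?thesis by (simp add: mult_ac)
qed

lemma suminf_summand_tail_le:
  assumes "2 \<le> n" "1 < l"
  shows "(\<Sum>j. summand n l m (j + B)) \<le> (1 / n) ^ B"
proof -
  have geom: "(\<lambda>j. (1 / n) ^ j) sums (1 / (1 - 1 / n))"
    using assms(1) by (intro geometric_sums) simp
  have "(\<Sum>j. summand n l m (j + B)) \<le> (\<Sum>j. (1 / n) ^ Suc B * (1 / n) ^ j)"
  proof (rule suminf_le)
    show "summand n l m (j + B) \<le> (1 / n) ^ Suc B * (1 / n) ^ j" for j
      using summand_le_geometric[OF _ assms(2), of n m "j + B"] assms(1)
      by (simp add: power_add mult_ac)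
    show "summable (\<lambda>j. summand n l m (j + B))"
      using summable_summand[of n l m] assms by (simp add: summable_iff_shift)
    show "summable (\<lambda>j. (1 / n) ^ Suc B * (1 / n) ^ j)"
      using geom by (intro summable_mult sums_summable)
  qed
  also have "\<dots> = (1 / n) ^ Suc B * (1 / (1 - 1 / n))"
    by (rule sums_unique[symmetric]) (rule sums_mult[OF geom])
  also have "\<dots> = (1 / n) ^ B * (1 / (n - 1))"
    using assms(1) by (simp add: field_simps)
  also have "\<dots> \<le> (1 / n) ^ B" using assms(1) by (intro mult_left_le) auto
  finally show ?thesis .
qed

lemma suminf_summand_upper_bound:
  assumes "2 \<le> n" "1 < l"
  shows "\<exists>C. \<forall>m::nat. 1 \<le> m \<longrightarrow>
    suminf (summand n l m) \<le> C / real m powr log l n"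
proof -
  obtain k where k: "n < l ^ k" using real_arch_pow[OF assms(2)] by blast
  define r where "r = l ^ k / n"
  define K where "K = (real k / (l - 1)) ^ k * (r / (r - 1)) + 1"
  have "suminf (summand n l m) \<le> K * n / real m powr log l n" if m: "1 \<le> m" for m :: nat
  proof -
    obtain B where B: "l ^ B \<le> real m" "real m < l ^ Suc B"
      using exists_power_bracket[OF assms(2), of "real m"] m by auto
    have "suminf (summand n l m) = (\<Sum>j. summand n l m (j + B)) + (\<Sum>a<B. summand n l m a)"
      using summable_summand assms by (intro suminf_split_initial_segment) simp
    also have "\<dots> \<le> K * (1 / n) ^ B"
      using suminf_summand_tail_le[OF assms, of m B] sum_summand_head_le[OF _ assms(2) k B(1)]
        assms(1)
      by (simp add: K_def r_def algebra_simps)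
    also have "\<dots> \<le> K * (n / real m powr log l n)"
    proof (rule mult_left_mono)
      have "real m powr log l n \<le> (l ^ Suc B) powr log l n"
        using B(2) assms by (intro powr_mono2) auto
      also have "\<dots> = n ^ Suc B" by (rule power_powr_log[OF assms(2)]) (use assms(1) in simp)
      finally show "(1 / n) ^ B \<le> n / real m powr log l n"
        using assms(1) m by (simp add: divide_simps power_one_over mult.commute)
      show "0 \<le> K" using k assms by (simp add: K_def r_def)
    qed
    finally show ?thesis by simp
  qed
  then show ?thesis by blast
qed

theorem lemma2p5:
  fixes G :: "('g, 'b) monoid_scheme" (structure) and p :: real
  assumes "group G" and "finite (carrier G)" and "card (carrier G) > 1"
    and "1/2 < p" and "p < 1"
  shows "\<exists>m0::nat. \<exists>c C :: real. 0 < c \<and> c \<le> C \<and>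
    (\<forall>m::nat. m \<ge> m0 \<longrightarrow>
      (let n = real (card (carrier G)); lam = p / (1 - p); alpha = ln n / ln lam;
           S = (\<Sum>a. (1 / n ^ (Suc a)) * (1 - (lam - 1) / (lam ^ (Suc a) - 1)) ^ m)
       in c / real m powr alpha \<le> S \<and> S \<le> C / real m powr alpha))"
proof -
  (* Only card (carrier G) >= 2 is used. *)
  define n where "n = real (card (carrier G))"
  define l where "l = p / (1 - p)"
  have n: "2 \<le> n" using assms(3) by (simp add: n_def)
  have l: "1 < l" using assms(4,5) by (simp add: l_def field_simps)
  obtain C where C: "\<And>m::nat. 1 \<le> m \<Longrightarrow> suminf (summand n l m) \<le> C / real m powr log l n"
    using suminf_summand_upper_bound[OF n l] by blast
  define c where "c = 1 / (2 * (2 * l\<^sup>2) powr log l n)"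
  have "0 < c" using l by (simp add: c_def)
  have "c / real m powr log l n \<le> suminf (summand n l m)" if "1 \<le> m" for m :: nat
    using suminf_summand_lower_bound[OF _ l that, of n] n by (simp add: c_def powr_mult mult.assoc)
  moreover have "C / real m powr log l n \<le> max c C / real m powr log l n" for m :: nat
    by (intro divide_right_mono) auto
  ultimately have "\<forall>m::nat. 1 \<le> m \<longrightarrow> c / real m powr log l n \<le> suminf (summand n l m)
      \<and> suminf (summand n l m) \<le> max c C / real m powr log l n"
    using C order_trans by blast
  then show ?thesis using \<open>0 < c\<close>
    unfolding Let_def n_def[symmetric] l_def[symmetric] summand_def[abs_def] log_def
    by (intro exI[of _ 1] exI[of _ c] exI[of _ "max c C"]) auto
qed

end
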